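(* Let $f:\mathbb{R}^p\times\mathbb{R}^N\to\mathbb{R}$ be differentiable with $M$-Lipschitz joint gradient, i.e. there is $M>0$ with $\|(\nabla_xf(x_1,z_1)-\nabla_xf(x_2,z_2),\nabla_zf(x_1,z_1)-\nabla_zf(x_2,z_2))\|\le M\|(x_1-x_2,z_1-z_2)\|$ for all $x_1,x_2,z_1,z_2$, and let $g:\mathbb{R}^p\to\mathbb{R}\cup\{\infty\}$ and $h:\mathbb{R}^N\to\mathbb{R}\cup\{\infty\}$ be proper, lower semicontinuous and directionally differentiable. Let $x_t\in\mathbb{R}^p$, $z_t\in\mathbb{R}^N$, $\eta_t^x,\eta_t^z>0$, and $$x_{t+1}\in\operatorname{Prox}_{g/\eta_t^x}\Big(x_t-\tfrac1{\eta_t^x}\nabla_xf(x_t,z_t)\Big),\qquad z_{t+1}\in\operatorname{Prox}_{h/\eta_t^z}\Big(z_t-\tfrac1{\eta_t^z}\nabla_zf(x_{t+1},z_t)\Big).$$ Define $\epsilon_t^x:=\eta_t^x(x_{t+1}-x_t)+\nabla_xf(x_t,z_t)-\nabla_xf(x_{t+1},z_{t+1})$ and $\epsilon_t^z:=\eta_t^z(z_{t+1}-z_t)+\nabla_zf(x_{t+1},z_t)-\nabla_zf(x_{t+1},z_{t+1})$. Then for all $d_x\in\mathbb{R}^p$, $d_z\in\mathbb{R}^N$, $$-\|\epsilon_t^x\|\|d_x\|-\|\epsilon_t^z\|\|d_z\|\le g'(x_{t+1};d_x)+h'(z_{t+1};d_z)+\langle\nabla_xf(x_{t+1},z_{t+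1}),d_x\rangle+\langle\nabla_zf(x_{t+1},z_{t+1}),d_z\rangle.$$
   Context: $\|\cdot\|$ is the Euclidean norm. $\operatorname{Prox}_{\phi/\eta}(y):=\operatorname{argmin}_{u}\{\tfrac1\eta\phi(u)+\tfrac12\|u-y\|^2\}$. The directional derivative is $\phi'(u;d):=\lim_{\tau\to+0}\frac{\phi(u+\tau d)-\phi(u)}{\tau}$ (possibly $+\infty$); directionally differentiable means this limit exists for all $d$ and all $u\in\operatorname{dom}\phi$. *)

theory Defs
  imports "HOL-Analysis.Analysis"
begin

text \<open>Extended-real valued functions phi : R^n -> R \<union> {+\<infinity>} are modelled as
  functions into ereal that never take the value -\<infinity>.\<close>

definition proper_fun :: "('a \<Rightarrow> ereal) \<Rightarrow> bool" where
  "proper_fun phi \<longleftrightarrow> (\<forall>x. phi x \<noteq> -\<infinity>) \<and> (\<exists>x. phi x \<noteq> \<infinity>)"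

definition lsc_fun :: "('a::topological_space \<Rightarrow> ereal) \<Rightarrow> bool" where
  "lsc_fun phi \<longleftrightarrow> (\<forall>x. phi x \<le> Liminf (at x) phi)"

definition edom :: "('a \<Rightarrow> ereal) \<Rightarrow> 'a set" where
  "edom phi = {x. phi x < \<infinity>}"

definition dir_quot :: "('a::real_vector \<Rightarrow> ereal) \<Rightarrow> 'a \<Rightarrow> 'a \<Rightarrow> real \<Rightarrow> ereal" where
  "dir_quot phi u d \<tau> = (phi (u + \<tau> *\<^sub>R d) - phi u) / ereal \<tau>"

definition dir_differentiable :: "('a::real_normed_vector \<Rightarrow> ereal) \<Rightarrow> bool" where
  "dir_differentiable phi \<longleftrightarrow>
     (\<forall>u\<in>edom phi. \<forall>d. \<exists>L. (dir_quot phi u d \<longlongrightarrow> L) (at_right 0))"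

definition dir_deriv :: "('a::real_normed_vector \<Rightarrow> ereal) \<Rightarrow> 'a \<Rightarrow> 'a \<Rightarrow> ereal" where
  "dir_deriv phi u d = Lim (at_right 0) (dir_quot phi u d)"

text \<open>u \<in> Prox_{phi/eta}(y), i.e. u minimises (1/eta) phi(v) + 1/2 |v - y|^2.\<close>
definition in_prox :: "('a::real_normed_vector \<Rightarrow> ereal) \<Rightarrow> real \<Rightarrow> 'a \<Rightarrow> 'a \<Rightarrow> bool" where
  "in_prox phi \<eta> y u \<longleftrightarrow>
     (\<forall>v. ereal (1/\<eta>) * phi u + ereal (norm (u - y)^2 / 2)
          \<le> ereal (1/\<eta>) * phi v + ereal (norm (v - y)^2 / 2))"

end

theory Submission
  imports Defs
begin

text \<open>A proximal point u of y minimises (1/\<eta>) phi + 1/2 |. - y|^2, so comparing its value with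
  the one at u + \<tau> d gives the lower bound - \<eta> (u - y) \<bullet> d - \<eta> \<tau> |d|^2 / 2 for the difference
  quotient of phi at u in direction d; letting \<tau> \<rightarrow> 0+ yields - \<eta> (u - y) \<bullet> d \<le> phi'(u; d).
  For a proximal gradient step y = x - (1/\<eta>) G one has \<eta> (u - y) = \<epsilon> + G' with
  \<epsilon> = \<eta> (u - x) + G - G', and Cauchy-Schwarz bounds - \<epsilon> \<bullet> d below by - |\<epsilon>| |d|.
  Adding the bounds for the two blocks gives the claim.\<close>

lemma in_prox_in_edom:
  assumes "proper_fun phi" and "\<eta> > 0" and "in_prox phi \<eta> y u"
  shows "u \<in> edom phi"
proof -
  obtain v where v: "phi v \<noteq> \<infinity>" and not_minf: "\<And>x. phi x \<noteq> -\<infinity>"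
    using assms(1) unfolding proper_fun_def by blast
  have "ereal (1/\<eta>) * phi u + ereal (norm (u - y)^2 / 2)
        \<le> ereal (1/\<eta>) * phi v + ereal (norm (v - y)^2 / 2)"
    using assms(3) unfolding in_prox_def by blast
  moreover have "ereal (1/\<eta>) * phi v + ereal (norm (v - y)^2 / 2) < \<infinity>"
    using v not_minf[of v] by (cases "phi v") auto
  ultimately show ?thesis
    using assms(2) unfolding edom_def by (cases "phi u") auto
qed

lemma in_prox_dir_quot_lower_bound:
  fixes phi :: "'a::real_inner \<Rightarrow> ereal"
  assumes "\<eta> > 0" and "in_prox phi \<eta> y u" and u: "phi u = ereal a" and "\<tau> > 0"
  shows "ereal (- \<eta> * ((u - y) \<bullet> d) - \<eta> * \<tau> * (norm d)^2 / 2) \<le> dir_quot phi u d \<tau>"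
proof (cases "phi (u + \<tau> *\<^sub>R d)")
  case PInf
  then show ?thesis unfolding dir_quot_def using u \<open>\<tau> > 0\<close> by simp
next
  case MInf
  have "ereal (1/\<eta>) * phi u + ereal (norm (u - y)^2 / 2)
        \<le> ereal (1/\<eta>) * phi (u + \<tau> *\<^sub>R d) + ereal (norm (u + \<tau> *\<^sub>R d - y)^2 / 2)"
    using assms(2) unfolding in_prox_def by blast
  then show ?thesis using MInf u \<open>\<eta> > 0\<close> by simp
next
  case (real b)
  have "ereal (1/\<eta>) * phi u + ereal (norm (u - y)^2 / 2)
        \<le> ereal (1/\<eta>) * phi (u + \<tau> *\<^sub>R d) + ereal (norm (u + \<tau> *\<^sub>R d - y)^2 / 2)"
    using assms(2) unfolding in_prox_def by blast
  then have "a/\<eta> + norm (u - y)^2 / 2 \<le> b/\<eta> + norm ((u - y) + \<tau> *\<^sub>R d)^2 / 2"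
    using u real by (simp add: algebra_simps)
  also have "norm ((u - y) + \<tau> *\<^sub>R d)^2 = norm (u - y)^2 + 2 * \<tau> * ((u - y) \<bullet> d) + \<tau>^2 * (norm d)^2"
    using dot_norm[of "u - y" "\<tau> *\<^sub>R d"] by (simp add: power_mult_distrib)
  finally have "(a - b) / \<eta> \<le> \<tau> * ((u - y) \<bullet> d) + \<tau>^2 * (norm d)^2 / 2"
    by (simp add: diff_divide_distrib add_divide_distrib)
  then have "a - b \<le> (\<tau> * ((u - y) \<bullet> d) + \<tau>^2 * (norm d)^2 / 2) * \<eta>"
    using \<open>\<eta> > 0\<close> by (simp add: pos_divide_le_eq)
  then have "\<tau> * (- \<eta> * ((u - y) \<bullet> d) - \<eta> * \<tau> * (norm d)^2 / 2) \<le> b - a"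
    by (simp add: algebra_simps power2_eq_square)
  then have "- \<eta> * ((u - y) \<bullet> d) - \<eta> * \<tau> * (norm d)^2 / 2 \<le> (b - a) / \<tau>"
    using \<open>\<tau> > 0\<close> by (simp add: field_simps)
  then show ?thesis unfolding dir_quot_def using u real \<open>\<tau> > 0\<close> by simp
qed

lemma dir_deriv_ge_limit_of_lower_bound:
  assumes "dir_differentiable phi" and "u \<in> edom phi"
    and "(F \<longlongrightarrow> c) (at_right 0)" and "\<forall>\<^sub>F \<tau> in at_right 0. F \<tau> \<le> dir_quot phi u d \<tau>"
  shows "c \<le> dir_deriv phi u d"
proof -
  obtain L where L: "(dir_quot phi u d \<longlongrightarrow> L) (at_right 0)"
    using assms(1,2) unfolding dir_differentiable_def by blast
  then have "dir_deriv phi u d = L"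
    unfolding dir_deriv_def by (simp add: tendsto_Lim)
  moreover have "c \<le> L"
    using tendsto_le[OF trivial_limit_at_right_real L assms(3,4)] .
  ultimately show ?thesis by simp
qed

lemma in_prox_dir_deriv_ge:
  fixes phi :: "'a::real_inner \<Rightarrow> ereal"
  assumes "proper_fun phi" and "dir_differentiable phi" and "\<eta> > 0" and "in_prox phi \<eta> y u"
  shows "ereal (- \<eta> * ((u - y) \<bullet> d)) \<le> dir_deriv phi u d"
proof -
  have u: "u \<in> edom phi"
    using in_prox_in_edom assms(1,3,4) .
  then obtain a where a: "phi u = ereal a"
    using assms(1) unfolding edom_def proper_fun_def by (cases "phi u") auto
  let ?F = "\<lambda>\<tau>. ereal (- \<eta> * ((u - y) \<bullet> d) - \<eta> * \<tau> * (norm d)^2 / 2)"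
  have "((\<lambda>\<tau>. - \<eta> * ((u - y) \<bullet> d) - \<eta> * \<tau> * (norm d)^2 / 2)
         \<longlongrightarrow> - \<eta> * ((u - y) \<bullet> d) - \<eta> * 0 * (norm d)^2 / 2) (at_right 0)"
    by (intro tendsto_intros) auto
  then have "(?F \<longlongrightarrow> ereal (- \<eta> * ((u - y) \<bullet> d))) (at_right 0)"
    by (simp add: tendsto_ereal)
  moreover have "\<forall>\<^sub>F \<tau> in at_right 0. ?F \<tau> \<le> dir_quot phi u d \<tau>"
    using in_prox_dir_quot_lower_bound[OF assms(3,4) a]
    by (auto simp: eventually_at_right_less eventually_at_filter)
  ultimately show ?thesis
    using dir_deriv_ge_limit_of_lower_bound[OF assms(2) u] by blast
qed

lemma prox_grad_step_dir_deriv_ge: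
  fixes phi :: "'a::real_inner \<Rightarrow> ereal"
  assumes "proper_fun phi" and "dir_differentiable phi" and "\<eta> > 0"
    and "in_prox phi \<eta> (x - (1/\<eta>) *\<^sub>R G) u"
  shows "ereal (- norm (\<eta> *\<^sub>R (u - x) + G - G') * norm d) \<le> dir_deriv phi u d + ereal (G' \<bullet> d)"
proof -
  define \<epsilon> where "\<epsilon> = \<eta> *\<^sub>R (u - x) + G - G'"
  have "\<eta> * ((u - (x - (1/\<eta>) *\<^sub>R G)) \<bullet> d) = (\<eta> *\<^sub>R (u - (x - (1/\<eta>) *\<^sub>R G))) \<bullet> d"
    by simp
  also have "\<dots> = \<epsilon> \<bullet> d + G' \<bullet> d"
    using \<open>\<eta> > 0\<close> unfolding \<epsilon>_def by (simp add: algebra_simps inner_add_left)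
  finally have "ereal (- (\<epsilon> \<bullet> d) - G' \<bullet> d) = ereal (- \<eta> * ((u - (x - (1/\<eta>) *\<^sub>R G)) \<bullet> d))"
    by simp
  also have "\<dots> \<le> dir_deriv phi u d"
    by (rule in_prox_dir_deriv_ge[OF assms])
  finally have "ereal (- (\<epsilon> \<bullet> d) - G' \<bullet> d) \<le> dir_deriv phi u d" .
  moreover have "- norm \<epsilon> * norm d \<le> - (\<epsilon> \<bullet> d)"
    using norm_cauchy_schwarz[of \<epsilon> d] by simp
  ultimately have "ereal (- norm \<epsilon> * norm d - G' \<bullet> d) + ereal (G' \<bullet> d)
                  \<le> dir_deriv phi u d + ereal (G' \<bullet> d)"
    by (intro add_right_mono) (meson ereal_less_eq(3) diff_right_mono order_trans)
  then show ?thesis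
    unfolding \<epsilon>_def by simp
qed

theorem lemma2:
  fixes f :: "'a::euclidean_space \<times> 'b::euclidean_space \<Rightarrow> real"
    and gradx :: "'a \<Rightarrow> 'b \<Rightarrow> 'a" and gradz :: "'a \<Rightarrow> 'b \<Rightarrow> 'b"
    and g :: "'a \<Rightarrow> ereal" and h :: "'b \<Rightarrow> ereal"
    and M \<eta>x \<eta>z :: real
    and xt xt1 :: 'a and zt zt1 :: 'b and dx :: 'a and dz :: 'b
  assumes f_deriv: "\<And>x z. (f has_derivative (\<lambda>(u, v). gradx x z \<bullet> u + gradz x z \<bullet> v)) (at (x, z))"
    and M_pos: "M > 0"
    and lip: "\<And>x1 x2 z1 z2. norm (gradx x1 z1 - gradx x2 z2, gradz x1 z1 - gradz x2 z2)
                 \<le> M * norm (x1 - x2, z1 - z2)"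
    and g_proper: "proper_fun g" and g_lsc: "lsc_fun g" and g_dd: "dir_differentiable g"
    and h_proper: "proper_fun h" and h_lsc: "lsc_fun h" and h_dd: "dir_differentiable h"
    and ex_pos: "\<eta>x > 0" and ez_pos: "\<eta>z > 0"
    and x_step: "in_prox g \<eta>x (xt - (1/\<eta>x) *\<^sub>R gradx xt zt) xt1"
    and z_step: "in_prox h \<eta>z (zt - (1/\<eta>z) *\<^sub>R gradz xt1 zt) zt1"
  shows "let \<epsilon>x = \<eta>x *\<^sub>R (xt1 - xt) + gradx xt zt - gradx xt1 zt1;
             \<epsilon>z = \<eta>z *\<^sub>R (zt1 - zt) + gradz xt1 zt - gradz xt1 zt1
         in ereal (- norm \<epsilon>x * norm dx - norm \<epsilon>z * norm dz)
            \<le> dir_deriv g xt1 dx + dir_deriv h zt1 dz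
               + ereal (gradx xt1 zt1 \<bullet> dx + gradz xt1 zt1 \<bullet> dz)"
proof -
  have "ereal (- norm (\<eta>x *\<^sub>R (xt1 - xt) + gradx xt zt - gradx xt1 zt1) * norm dx)
          + ereal (- norm (\<eta>z *\<^sub>R (zt1 - zt) + gradz xt1 zt - gradz xt1 zt1) * norm dz)
        \<le> (dir_deriv g xt1 dx + ereal (gradx xt1 zt1 \<bullet> dx))
          + (dir_deriv h zt1 dz + ereal (gradz xt1 zt1 \<bullet> dz))"
    using prox_grad_step_dir_deriv_ge[OF g_proper g_dd ex_pos x_step]
      prox_grad_step_dir_deriv_ge[OF h_proper h_dd ez_pos z_step]
    by (rule add_mono)
  then show ?thesis
    unfolding Let_def by (simp add: ac_simps)
qed

end
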